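(* Let $\hbar>0$ and let $\mathcal Q=\mathbb{R}^N$ carry global coordinates $(\lambda^1,\dots,\lambda^k,x^1,\dots,x^{N-k})$. Let $S(\lambda,x)$ be a smooth real function on $\mathcal Q$ and consider on $L^2(\mathcal Q,d\lambda\,dx)$ the $k$ constraint operators $\hat C_I=\hat p_I-\frac{\partial S}{\partial\lambda^I}(\lambda,x)$, $I=1,\dots,k$, with $\hat p_I=-i\hbar\,\partial/\partial\lambda^I$. Let $G_K(\lambda,x)$, $K=1,\dots,k$, be smooth real functions of the configuration variables only which are global gauge conditions: for each $x$ the system $G_K(\lambda,x)=0$ has exactly one solution $\lambda^K=c^K(x)$, and $\det\big(\partial G_K/\partial\lambda^I\big)\neq0$ there. Then for every kinematical state $\psi^{\rm kin}$ for which the expressions below are defined, $$(2\pi)^k\prod_{I=1}^k\delta(\hat C_I)\,\Big|\det\big([\hat G_M,\hat C_N]\big)\Big|\,\prod_{K=1}^k\delta(\hat G_K)\,\prod_{J=1}^k\delta(\hat C_J)\,\psi^{\rm kin}(\lambda,x)=\psi^{\rm phys}(\lambda,x),$$ where $\psi^{\rm phys}:=\prod_{J=1}^k\delta(\hat C_J)\psi^{\rm kin}$. In particular $\psi^{\rm kin}$ and $|\det([\hat G_M,\hat C_N])|\prod_K\delta(\hat G_K)\psi^{\rm phys}$ are mapped to the same physical state by $\prod_I\delta(\hat C_I)$.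
   Context: For a self-adjoint operator $\hat C$ with absolutely continuous spectrum, the (improper) group-averaging projector is $\delta(\hat C):=\frac{1}{2\pi\hbar}\int_{\mathbb{R}}ds\,e^{is\hat C/\hbar}$. The operators $\hat G_K$ act by multiplication by $G_K(\lambda,x)$, and $\delta(\hat G_K)$ denotes multiplication by the Dirac delta distribution $\delta(G_K(\lambda,x))$. $[\cdot,\cdot]$ is the commutator; note $[\hat G_M,\hat C_N]=i\hbar\,\partial G_M/\partial\lambda^N$ is a multiplication operator, and $\det([\hat G_M,\hat C_N])$ is the determinant of this $k\times k$ matrix of functions. Kinematical states are elements of $L^2(\mathcal Q,d\lambda\,dx)$ (assumed such that the group averaging integrals converge); physical states are the images $\prod_I\delta(\hat C_I)\psi^{\rm kin}$, which are annihilated by all $\hat C_I$. *)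

theory Defs
  imports "HOL-Analysis.Analysis"
begin

text \<open>Configuration space Q = R^N with global coordinates (lambda, x),
  lambda in R^k (type index 'k), x in R^(N-k) (type index 'm).
  Points of Q are pairs (lambda, x) :: real^'k \<times> real^'m.\<close>

coinductive smooth_fun :: "('a::euclidean_space \<Rightarrow> real) \<Rightarrow> bool" where
  "(\<forall>z. f differentiable (at z)) \<Longrightarrow>
   (\<forall>i\<in>Basis. smooth_fun (\<lambda>z. frechet_derivative f (at z) i)) \<Longrightarrow> smooth_fun f"

text \<open>The unitary group generated by the commuting constraints
  C_I = p_I - dS/dlambda^I, p_I = -i hbar d/dlambda^I:
  exp(i s.C/hbar) psi (l,x) = exp(i (S(l,x) - S(l+s,x))/hbar) psi(l+s,x).\<close>
definition constraint_flow ::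
  "real \<Rightarrow> (real^'k \<Rightarrow> real^'m \<Rightarrow> real) \<Rightarrow> real^'k \<Rightarrow>
   (real^'k \<Rightarrow> real^'m \<Rightarrow> complex) \<Rightarrow> real^'k \<Rightarrow> real^'m \<Rightarrow> complex" where
  "constraint_flow hbar S s psi l x =
     exp (\<i> * complex_of_real ((S l x - S (l + s) x) / hbar)) * psi (l + s) x"

text \<open>Group averaging prod_I delta(C_I) psi
  = (2 pi hbar)^(-k) int_{R^k} ds exp(i s.C/hbar) psi.\<close>
definition delta_C ::
  "real \<Rightarrow> (real^'k \<Rightarrow> real^'m \<Rightarrow> real) \<Rightarrow>
   (real^'k \<Rightarrow> real^'m \<Rightarrow> complex) \<Rightarrow> real^'k \<Rightarrow> real^'m \<Rightarrow> complex" where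
  "delta_C hbar S psi l x =
     complex_of_real (1 / (2 * pi * hbar) ^ CARD('k)) *
       (LINT s|lborel. constraint_flow hbar S s psi l x)"

text \<open>Integral of f against the pulled-back Dirac delta delta^k(F(s)) over R^k
  (F with regular zeros): sum over zeros of F of f(z)/|det DF(z)|.\<close>
definition delta_pullback_integral ::
  "(real^'k \<Rightarrow> real^'k) \<Rightarrow> (real^'k \<Rightarrow> complex) \<Rightarrow> complex" where
  "delta_pullback_integral F f =
     (\<Sum>z\<in>{z. F z = 0}. f z / complex_of_real \<bar>det (jacobian F (at z))\<bar>)"

text \<open>det([G_M, C_N]) where [G_M, C_N] = i hbar dG_M/dlambda^N (multiplication operator).\<close>
definition det_comm ::
  "real \<Rightarrow> (real^'k \<Rightarrow> real^'m \<Rightarrow> real^'k) \<Rightarrow> real^'k \<Rightarrow> real^'m \<Rightarrow> complex" where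
  "det_comm hbar G l x =
     det (\<chi> M N. \<i> * complex_of_real hbar *
                  complex_of_real (jacobian (\<lambda>l'. G l' x) (at l) $ M $ N))"

text \<open>prod_I delta(C_I) applied to the distribution g(l,x) * prod_K delta(G_K(l,x)):
  (2 pi hbar)^(-k) int ds exp(i s.C/hbar) [delta(G) g], the s-integral being the
  pairing with the pulled-back delta distribution s |-> delta(G(l+s,x)).\<close>
definition delta_C_deltaG ::
  "real \<Rightarrow> (real^'k \<Rightarrow> real^'m \<Rightarrow> real) \<Rightarrow> (real^'k \<Rightarrow> real^'m \<Rightarrow> real^'k) \<Rightarrow>
   (real^'k \<Rightarrow> real^'m \<Rightarrow> complex) \<Rightarrow> real^'k \<Rightarrow> real^'m \<Rightarrow> complex" where
  "delta_C_deltaG hbar S G g l x =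
     complex_of_real (1 / (2 * pi * hbar) ^ CARD('k)) *
       delta_pullback_integral (\<lambda>s. G (l + s) x) (\<lambda>s. constraint_flow hbar S s g l x)"

end

theory Submission
  imports Defs
begin

text \<open>The averaged state is covariant under translations in \<open>\<lambda>\<close>: by translation invariance of
  Lebesgue measure, \<open>\<delta>(C)\<psi>(\<lambda>,x) = exp(i(S(\<lambda>,x) - S(\<lambda>\<^sub>0,x))/\<hbar>) \<delta>(C)\<psi>(\<lambda>\<^sub>0,x)\<close>.
  Since \<open>G(\<cdot>,x)\<close> has the single regular zero \<open>\<lambda>\<^sub>0 = c(x)\<close>, the pulled-back delta in
  \<open>\<delta>(C)\<delta>(G)\<close> evaluates the flowed integrand at \<open>s = \<lambda>\<^sub>0 - \<lambda>\<close> with weight \<open>1/|det \<partial>G/\<partial>\<lambda>|\<close>.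
  The flow phase turns \<open>\<delta>(C)\<psi>(\<lambda>\<^sub>0,x)\<close> back into \<open>\<delta>(C)\<psi>(\<lambda>,x)\<close>, and
  \<open>|det [G,C]| = \<hbar>\<^sup>k |det \<partial>G/\<partial>\<lambda>|\<close> cancels the weight together with the normalisation
  \<open>(2\<pi>)\<^sup>k/(2\<pi>\<hbar>)\<^sup>k\<close>. None of the regularity hypotheses (smoothness, square integrability,
  integrability of the averaging integrand) is used: they only make the distributional
  expressions meaningful, while the identity holds pointwise.\<close>

lemma lborel_integral_translate:
  fixes f :: "'a::euclidean_space \<Rightarrow> 'b::{banach, second_countable_topology}"
  shows "(LINT s|lborel. f (a + s)) = (LINT s|lborel. f s)"
proof (cases "f \<in> borel_measurable lborel")
  case True
  then show ?thesis
    using integral_distr[of "(+) a" lborel borel f] by (simp add: lborel_distr_plus)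
next
  case False
  have "(\<lambda>s. f (a + s)) \<notin> borel_measurable lborel"
  proof
    assume "(\<lambda>s. f (a + s)) \<in> borel_measurable lborel"
    then have "(\<lambda>s. f (a + (s - a))) \<in> borel_measurable lborel"
      by (rule measurable_compose[rotated]) simp
    with False show False by simp
  qed
  then have "\<not> integrable lborel (\<lambda>s. f (a + s))" and "\<not> integrable lborel f"
    using False borel_measurable_integrable by blast+
  then show ?thesis
    by (simp add: not_integrable_integral_eq)
qed

lemma delta_C_translate:
  "delta_C hbar S psi l x =
     exp (\<i> * complex_of_real ((S l x - S l0 x) / hbar)) * delta_C hbar S psi l0 x"
proof -
  let ?E = "exp (\<i> * complex_of_real ((S l x - S l0 x) / hbar))"
  have "constraint_flow hbar S s psi l x = ?E * constraint_flow hbar S ((l - l0) + s) psi l0 x" for s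
    unfolding constraint_flow_def
    by (simp add: algebra_simps exp_add[symmetric] diff_divide_distrib)
  then show ?thesis
    unfolding delta_C_def
    by (simp add: lborel_integral_translate[of "\<lambda>s. constraint_flow hbar S s psi l0 x"])
qed

lemma has_derivative_translate_iff:
  fixes f :: "'a::real_normed_vector \<Rightarrow> 'b::real_normed_vector"
  shows "((\<lambda>s. f (l + s)) has_derivative D) (at s) \<longleftrightarrow> (f has_derivative D) (at (l + s))"
proof
  assume "((\<lambda>s. f (l + s)) has_derivative D) (at s)"
  moreover have "((\<lambda>y. y - l) has_derivative (\<lambda>y. y)) (at (l + s))"
    by (auto intro!: derivative_eq_intros)
  ultimately show "(f has_derivative D) (at (l + s))"
    using has_derivative_compose[of "\<lambda>y. y - l" "\<lambda>y. y" "l + s" UNIV "\<lambda>s. f (l + s)" D]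
    by (simp add: o_def)
next
  assume "(f has_derivative D) (at (l + s))"
  moreover have "((\<lambda>y. l + y) has_derivative (\<lambda>y. y)) (at s)"
    by (auto intro!: derivative_eq_intros)
  ultimately show "((\<lambda>s. f (l + s)) has_derivative D) (at s)"
    using has_derivative_compose[of "\<lambda>y. l + y" "\<lambda>y. y" s UNIV f D] by (simp add: o_def)
qed

lemma jacobian_translate: "jacobian (\<lambda>s. f (l + s)) (at s) = jacobian f (at (l + s))"
  unfolding jacobian_def frechet_derivative_def has_derivative_translate_iff ..

lemma delta_pullback_integral_translate_unique_zero:
  fixes F :: "real^'n \<Rightarrow> real^'n"
  assumes zero: "F z0 = 0" and unique: "\<And>z. F z = 0 \<Longrightarrow> z = z0"
  shows "delta_pullback_integral (\<lambda>s. F (l + s)) f =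
           f (z0 - l) / complex_of_real \<bar>det (jacobian F (at z0))\<bar>"
proof -
  have "F (l + s) = 0 \<longleftrightarrow> s = z0 - l" for s
    using zero unique[of "l + s"] by (auto simp: eq_diff_eq add.commute)
  then have "{s. F (l + s) = 0} = {z0 - l}"
    by auto
  moreover have "jacobian (\<lambda>s. F (l + s)) (at (z0 - l)) = jacobian F (at z0)"
    using jacobian_translate[of F l "z0 - l"] by simp
  ultimately show ?thesis
    unfolding delta_pullback_integral_def by simp
qed

lemma det_mult_of_real_matrix:
  fixes B :: "real^'n^'n" and a :: complex
  shows "det (\<chi> M N. a * complex_of_real (B $ M $ N)) = a ^ CARD('n) * complex_of_real (det B)"
  unfolding det_def
  by (simp add: prod.distrib sum_distrib_left mult_ac)

lemma norm_det_comm: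
  fixes G :: "real^'k \<Rightarrow> real^'m \<Rightarrow> real^'k"
  assumes "hbar > 0"
  shows "cmod (det_comm hbar G l x) = hbar ^ CARD('k) * \<bar>det (jacobian (\<lambda>l'. G l' x) (at l))\<bar>"
  unfolding det_comm_def det_mult_of_real_matrix
  using assms by (simp add: norm_mult norm_power)

theorem lemma1:
  fixes hbar :: real
    and S :: "real^'k \<Rightarrow> real^'m \<Rightarrow> real"
    and G :: "real^'k \<Rightarrow> real^'m \<Rightarrow> real^'k"
    and psi :: "real^'k \<Rightarrow> real^'m \<Rightarrow> complex"
  assumes hbar_pos: "hbar > 0"
    and S_smooth: "smooth_fun (\<lambda>(l, x). S l x)"
    and G_smooth: "\<forall>K. smooth_fun (\<lambda>(l, x). G l x $ K)"
    and G_unique: "\<forall>x. \<exists>!l. G l x = 0"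
    and G_regular: "\<forall>l x. G l x = 0 \<longrightarrow> det (jacobian (\<lambda>l'. G l' x) (at l)) \<noteq> 0"
    and psi_L2: "(\<lambda>(l, x). psi l x) \<in> borel_measurable (lborel \<Otimes>\<^sub>M lborel)"
                "integrable (lborel \<Otimes>\<^sub>M lborel) (\<lambda>(l, x). (cmod (psi l x))\<^sup>2)"
    and psi_avg: "\<forall>l x. integrable lborel (\<lambda>s. constraint_flow hbar S s psi l x)"
  shows "\<forall>l x. complex_of_real ((2 * pi) ^ CARD('k)) *
            delta_C_deltaG hbar S G
              (\<lambda>l' x'. complex_of_real (cmod (det_comm hbar G l' x')) * delta_C hbar S psi l' x') l x
          = delta_C hbar S psi l x"
proof (intro allI)
  fix l x
  let ?g = "(\<lambda>l' x'. complex_of_real (cmod (det_comm hbar G l' x')) * delta_C hbar S psi l' x')"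
  obtain l0 where zero: "G l0 x = 0" and unique: "\<And>l'. G l' x = 0 \<Longrightarrow> l' = l0"
    using G_unique by blast
  define J where "J = det (jacobian (\<lambda>l'. G l' x) (at l0))"
  have "J \<noteq> 0"
    using G_regular zero unfolding J_def by blast
  have pullback: "delta_pullback_integral (\<lambda>s. G (l + s) x) f = f (l0 - l) / complex_of_real \<bar>J\<bar>"
    for f :: "real^'k \<Rightarrow> complex"
    unfolding J_def using zero unique by (rule delta_pullback_integral_translate_unique_zero)
  have "delta_C_deltaG hbar S G ?g l x
      = complex_of_real (1 / (2 * pi * hbar) ^ CARD('k)) *
          (exp (\<i> * complex_of_real ((S l x - S l0 x) / hbar)) *
           (complex_of_real (hbar ^ CARD('k) * \<bar>J\<bar>) * delta_C hbar S psi l0 x)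
           / complex_of_real \<bar>J\<bar>)"
    unfolding delta_C_deltaG_def pullback constraint_flow_def norm_det_comm[OF hbar_pos] J_def
    by simp
  also have "\<dots> = complex_of_real (1 / (2 * pi * hbar) ^ CARD('k) * hbar ^ CARD('k)) *
                   delta_C hbar S psi l x"
    unfolding delta_C_translate[of hbar S psi l x l0] using \<open>J \<noteq> 0\<close> by simp
  also have "\<dots> = complex_of_real (1 / (2 * pi) ^ CARD('k)) * delta_C hbar S psi l x"
    using hbar_pos by (simp add: power_mult_distrib)
  finally show "complex_of_real ((2 * pi) ^ CARD('k)) * delta_C_deltaG hbar S G ?g l x
      = delta_C hbar S psi l x"
    by (simp add: mult.assoc[symmetric] of_real_mult[symmetric])
qed

end
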